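(* Let $(n,w)$ be a $\{0,1\}$-instance of TSP with $n\ge1$ and $w(K_n)=d\binom n2$ for some $d\in[0,1]$ satisfying $n^{-1}\le d\le 1-4n^{-1}$. Then there exists an optimal matching $M^*$ of $K_n$ with $w(M^* )\le f(n,d)$, where $$f(n,d)=\begin{cases}\tfrac12 dn-\tfrac18 dn+1 & \text{if } d\le \tfrac{9}{25},\\ \tfrac12 dn-\tfrac18(1-d)^2n+1 & \text{if } d\ge\tfrac{9}{25}.\end{cases}$$
   Context: $K_n=(V_n,E_n)$ is the complete graph on $n$ vertices; a $\{0,1\}$-instance is a weighting $w:E_n\to\{0,1\}$; $w(G)=\sum_{e\in E(G)}w(e)$. An optimal matching of $K_n$ is any set of $\lfloor n/2\rfloor$ pairwise disjoint edges of $K_n$. *)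

theory Defs
  imports Complex_Main
begin

definition Kn_edges :: "nat \<Rightarrow> nat set set" where
  "Kn_edges n = {e. e \<subseteq> {..<n} \<and> card e = 2}"

definition zero_one_instance :: "nat \<Rightarrow> (nat set \<Rightarrow> nat) \<Rightarrow> bool" where
  "zero_one_instance n w \<longleftrightarrow> (\<forall>e \<in> Kn_edges n. w e \<in> {0, 1})"

definition weight :: "(nat set \<Rightarrow> nat) \<Rightarrow> nat set set \<Rightarrow> nat" where
  "weight w F = (\<Sum>e\<in>F. w e)"

definition optimal_matching :: "nat \<Rightarrow> nat set set \<Rightarrow> bool" where
  "optimal_matching n M \<longleftrightarrow> M \<subseteq> Kn_edges n \<and> card M = n div 2 \<and>
     (\<forall>e\<in>M. \<forall>f\<in>M. e \<noteq> f \<longrightarrow> e \<inter> f = {})"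

definition f_bound :: "nat \<Rightarrow> real \<Rightarrow> real" where
  "f_bound n d = (if d \<le> 9/25 then 1/2 * d * n - 1/8 * d * n + 1
                  else 1/2 * d * n - 1/8 * (1 - d)^2 * n + 1)"

end

theory Submission
  imports Defs
begin

(* Fix a maximum matching N of edges of weight 0, with U unmatched vertices.  Pairing up the
   unmatched vertices arbitrarily extends N to an optimal matching of weight at most U/2, so it
   suffices to show U/2 <= f(n,d).  Maximality of N excludes augmenting paths of length 1, 3
   and 5, which forces many edges of weight 1: all pairs of unmatched vertices, almost all
   pairs between a matched and an unmatched vertex, and all pairs of "lonely ends" of heavy
   matching edges.  Counting them gives d * C(n,2) >= forced_ones U V Q, where V = card N and
   Q is the number of heavy edges. *)

text \<open>Throughout the arithmetic part, N is the number of vertices, U the number of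
  vertices left uncovered by a maximum matching of 0-edges, V the number of edges of that
  matching, and Q the number of its "heavy" edges.  The combinatorial part shows that the
  instance then has at least forced_ones U V Q edges of weight 1.\<close>

definition forced_ones :: "real \<Rightarrow> real \<Rightarrow> real \<Rightarrow> real" where
  "forced_ones U V Q = U*(U-1)/2 + Q*U + (V-Q)*(2*U-2) + Q*(Q-1)/2"

text \<open>Minimising over Q: the bound is smallest for Q = U - 3/2.\<close>

lemma forced_ones_ge_parabola:
  "forced_ones U V Q \<ge> U*(U-1)/2 + 2*V*(U-1) - (2*U-3)^2/8"
proof -
  have "forced_ones U V Q - (U*(U-1)/2 + 2*V*(U-1) - (2*U-3)^2/8) = (Q - U + 3/2)^2/2"
    unfolding forced_ones_def by (simp add: power2_eq_square field_simps)
  thus ?thesis using zero_le_power2[of "Q - U + 3/2"] by linarith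
qed

lemma forced_ones_ge_clique:
  assumes "0 \<le> Q" "Q \<le> V" "V \<le> U - 3/2"
  shows "forced_ones U V Q \<ge> (U+V)*(U+V-1)/2"
proof -
  have "forced_ones U V Q - (U+V)*(U+V-1)/2 = (V-Q)*(2*U-3-Q-V)/2"
    unfolding forced_ones_def by (simp add: field_simps)
  moreover have "(V-Q)*(2*U-3-Q-V) \<ge> 0" using assms by (intro mult_nonneg_nonneg) auto
  ultimately show ?thesis by linarith
qed

text \<open>A clique on U + V > 2N/3 vertices forces density above 9/25.\<close>

lemma few_matched_edges_imp_dense:
  fixes N U V Q d :: real
  assumes "N = 2*V + U" "0 \<le> Q" "Q \<le> V" "V \<le> U - 3/2" "N \<ge> 5"
    and forced: "d*(N*(N-1)/2) \<ge> forced_ones U V Q"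
  shows "d > 9/25"
proof (rule ccontr)
  assume "\<not> d > 9/25"
  define S where "S = U + V"
  define A where "A = (4*N+3)/6"
  have "d*(N*(N-1)/2) \<ge> S*(S-1)/2"
    using forced forced_ones_ge_clique[OF assms(2-4)] unfolding S_def by linarith
  moreover have "d*(N*(N-1)/2) \<le> 9/25*(N*(N-1)/2)"
    using \<open>\<not> d > 9/25\<close> assms(5) by (intro mult_right_mono) auto
  ultimately have dens: "25*(S*(S-1)) \<le> 9*(N*(N-1))" by linarith
  have "6*S \<ge> 4*N + 3" using assms(1,4) unfolding S_def by (simp add: algebra_simps)
  hence "S \<ge> A" "A \<ge> 1" using assms(5) unfolding A_def by auto
  hence "(S - A)*(S + A - 1) \<ge> 0" by simp
  hence "S*(S-1) \<ge> A*(A-1)" by (simp add: algebra_simps)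
  moreover have "25*(A*(A-1)) = 100/9*(N*N) - 25/4" unfolding A_def by (simp add: field_simps)
  moreover have "N*N \<ge> 5*5" using assms(5) by (intro mult_mono) auto
  ultimately show False using dens assms(5) by (simp add: algebra_simps)
qed

lemma sparse_bound_many_matched_edges:
  fixes N U V Q d :: real
  assumes "N = 2*V + U" "V \<ge> U - 3/2" "N \<ge> 5" "0 \<le> d"
    and forced: "d*(N*(N-1)/2) \<ge> forced_ones U V Q"
  shows "U \<le> 3/4*d*N + 2"
proof (rule ccontr)
  assume "\<not> ?thesis"
  moreover have "d*N \<ge> 0" using assms by simp
  ultimately have U2: "U > 2" "3*(d*N) < 4*U - 8" by (simp_all add: mult.assoc)
  have "6*(d*(N*(N-1)/2)) = 3*(d*N)*(N-1)" by (simp add: field_simps)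
  also have "\<dots> < (4*U-8)*(N-1)" using U2 assms(3) by (intro mult_strict_right_mono) auto
  finally have upper: "6*(d*(N*(N-1)/2)) < (4*U-8)*(N-1)" .
  define par where "par = U*(U-1)/2 + 2*V*(U-1) - (2*U-3)^2/8"
  have "6*par - (4*U-8)*(N-1) = -4*U^2 + 18*U - 59/4 + 4*(V*(U+1))"
    unfolding par_def using assms(1) by (simp add: power2_eq_square field_simps)
  moreover have "V*(U+1) \<ge> (U-3/2)*(U+1)" using assms(2) U2 by (intro mult_right_mono) auto
  moreover have "(U-3/2)*(U+1) = U^2 - U/2 - 3/2" by (simp add: power2_eq_square algebra_simps)
  ultimately have "6*par > (4*U-8)*(N-1)" using U2 by linarith
  moreover have "par \<le> d*(N*(N-1)/2)"
    using forced forced_ones_ge_parabola[of U V Q] unfolding par_def by linarith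
  ultimately show False using upper by linarith
qed

lemma sparse_bound:
  fixes N U V Q d :: real
  assumes "N = 2*V + U" "0 \<le> Q" "Q \<le> V" "N \<ge> 5" "0 \<le> d" "d \<le> 9/25"
    and forced: "d*(N*(N-1)/2) \<ge> forced_ones U V Q"
  shows "U \<le> 3/4*d*N + 2"
proof (cases "V \<ge> U - 3/2")
  case True
  then show ?thesis using sparse_bound_many_matched_edges assms by blast
next
  case False
  then have "d > 9/25" using few_matched_edges_imp_dense assms by (meson less_eq_real_def not_le)
  then show ?thesis using assms(6) by simp
qed

lemma dense_bound_many_matched_edges_core:
  fixes N U V d :: real
  assumes "N = 2*V + U" "V \<ge> U - 3/2" "N \<ge> 5" "U - 2 > N/4"
    and par: "d*(N*(N-1)/2) \<ge> U*(U-1)/2 + 2*V*(U-1) - (2*U-3)^2/8"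
  shows "(5*d/4 - 1/5)*N \<ge> U - 2"
proof -
  define a where "a = N/4 + 2"
  define b where "b = (N+3)/3"
  have "3*U \<le> N + 3" using assms(1,2) by linarith
  hence ab: "U \<ge> a" "U \<le> b" unfolding a_def b_def using assms(4) by (auto simp: field_simps)
  define R where "R = -200*U^2 + 120*N*U - 16*N^2 - 24*N + 480*U - 385"
  define t where "t = U - a"
  define p where "p = t*(b-U)"
  define r where "r = N*t"
  have "R = 200*p + (10/3)*r - 120*t + 3/2*N^2 + 136*N - 225"
    unfolding R_def p_def r_def t_def a_def b_def by (simp add: power2_eq_square field_simps)
  moreover have "p \<ge> 0" "r \<ge> 0"
    unfolding p_def r_def t_def using ab assms(3) by (auto intro: mult_nonneg_nonneg)
  moreover have "t \<le> N/12 - 1" using ab unfolding t_def a_def b_def by auto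
  moreover have "N^2 \<ge> 0" by simp
  ultimately have R0: "R \<ge> 0" using assms(3) by linarith
  define par where "par = U*(U-1)/2 + 2*V*(U-1) - (2*U-3)^2/8"
  have "R = 200*par - 80*((N-1)*(U-2)) - 16*(N*(N-1))"
    unfolding R_def par_def using assms(1) by (simp add: power2_eq_square field_simps)
  moreover have "par \<le> d*(N*(N-1)/2)" using par unfolding par_def .
  ultimately have "25*(d*(N*(N-1)/2)) \<ge> 10*((N-1)*(U-2)) + 2*(N*(N-1))"
    using R0 by linarith
  moreover have "25*(d*(N*(N-1)/2)) = (N-1)*(25*d*N/2)"
    "10*((N-1)*(U-2)) + 2*(N*(N-1)) = (N-1)*(10*(U-2) + 2*N)" by (simp_all add: algebra_simps)
  ultimately have "(N-1)*(25*d*N/2) \<ge> (N-1)*(10*(U-2) + 2*N)" by linarith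
  hence "25*d*N/2 \<ge> 10*(U-2) + 2*N" using assms(3) by (subst (asm) mult_le_cancel_left) auto
  thus ?thesis by (simp add: algebra_simps)
qed

text \<open>Dense regime, many matched edges.  For d >= 1/2 the bound is implied by N >= 3U - 3;
  for d < 1/2 it follows from the linear lower estimate (5d/4 - 1/5) N of the right-hand side.\<close>

lemma dense_bound_many_matched_edges:
  fixes N U V Q d :: real
  assumes "N = 2*V + U" "V \<ge> U - 3/2" "N \<ge> 5" "9/25 < d" "d \<le> 1"
    and forced: "d*(N*(N-1)/2) \<ge> forced_ones U V Q"
  shows "U \<le> d*N - (1-d)^2*N/4 + 2"
proof -
  have N3: "N \<ge> 3*U - 3" using assms(1,2) by linarith
  show ?thesis
  proof (cases "d \<ge> 1/2")
    case True
    have "(1-d)^2 \<le> (1/2)^2" by (rule power_mono) (use True assms in auto)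
    hence "(1-d)^2*N \<le> (1/4)*N" using assms(3) by (intro mult_right_mono) (auto simp: power2_eq_square)
    moreover have "d*N \<ge> (1/2)*N" using True assms(3) by (intro mult_right_mono) auto
    ultimately show ?thesis using N3 assms(3) by linarith
  next
    case False
    have "(d - 9/25)*(16/25 - d) \<ge> 0" using False assms(4) by (intro mult_nonneg_nonneg) auto
    moreover have "(1-d)^2 = 1 - 2*d + d*d" by (simp add: power2_eq_square algebra_simps)
    ultimately have "d - (1-d)^2/4 \<ge> 5*d/4 - 1/5" by (simp add: algebra_simps)
    hence "(5*d/4 - 1/5)*N \<le> (d - (1-d)^2/4)*N" using assms(3) by (intro mult_right_mono) auto
    hence lower: "d*N - (1-d)^2*N/4 \<ge> (5*d/4 - 1/5)*N" by (simp add: algebra_simps)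
    show ?thesis
    proof (cases "U - 2 \<le> N/4")
      case True
      have "(5*d/4 - 1/5)*N \<ge> (1/4)*N" using assms(3,4) by (intro mult_right_mono) auto
      thus ?thesis using lower True by linarith
    next
      case False
      have "d*(N*(N-1)/2) \<ge> U*(U-1)/2 + 2*V*(U-1) - (2*U-3)^2/8"
        using forced forced_ones_ge_parabola[of U V Q] by linarith
      with False assms(1-3) have "(5*d/4 - 1/5)*N \<ge> U - 2"
        by (intro dense_bound_many_matched_edges_core) auto
      thus ?thesis using lower by linarith
    qed
  qed
qed

text \<open>The fraction of the pairs of an N-set that meet a fixed V-subset.\<close>

definition outside_fraction :: "real \<Rightarrow> real \<Rightarrow> real" where
  "outside_fraction N V = V*(2*N-1-V) / (N*(N-1))"

text \<open>A polynomial inequality equivalent to the next lemma after clearing denominators.\<close>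

lemma outside_fraction_key_inequality:
  fixes N V :: real
  assumes "N \<ge> 2" "V \<le> N/2" "V = 0 \<or> V \<ge> 1"
  shows "V^2*(2*N-1-V)^2 \<le> 8*N*(N-1)^2 + 4*N*(N-1)*V*(V-1)"
proof -
  have "8*N*(N-1)^2 + 4*N*(N-1)*V*(V-1) - V^2*(2*N-1-V)^2
      = 4*N*(N-1)*(2*(N-1) - V) + V^2*(V*(4*N-2-V) - 1)"
    by (simp add: power2_eq_square algebra_simps)
  moreover have "4*N*(N-1)*(2*(N-1) - V) \<ge> 0" using assms by (intro mult_nonneg_nonneg) auto
  moreover have "V^2*(V*(4*N-2-V) - 1) \<ge> 0"
  proof (cases "V = 0")
    case False
    hence "V*(4*N-2-V) \<ge> 1*1" using assms by (intro mult_mono) auto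
    thus ?thesis by simp
  qed simp
  ultimately show ?thesis by linarith
qed

text \<open>If the missing density e = 1 - d is at most the outside fraction, then
  eN + e^2 N/4 <= 2V + 2, which is the dense-regime bound.\<close>

lemma outside_fraction_bound:
  fixes N V :: real
  assumes "N \<ge> 2" "V \<le> N/2" "V = 0 \<or> V \<ge> 1"
  shows "outside_fraction N V * N + (outside_fraction N V)^2 * N/4 \<le> 2*V + 2"
proof -
  define D where "D = N*(N-1)"
  define W where "W = V*(2*N-1-V)"
  have D0: "D > 0" using assms(1) unfolding D_def by simp
  have "outside_fraction N V * N + (outside_fraction N V)^2 * N/4 = ((4*D*W + W^2)*N)/(4*D^2)"
    unfolding outside_fraction_def D_def[symmetric] W_def[symmetric] using D0
    by (simp add: power2_eq_square field_simps)
  also have "\<dots> \<le> 2*V + 2"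
  proof -
    have "4*D*W + W^2 = 8*N*(N-1)^2*V - 4*N*(N-1)*V*(V-1) + V^2*(2*N-1-V)^2"
      unfolding D_def W_def by (simp add: power2_eq_square algebra_simps)
    hence "4*D*W + W^2 \<le> 8*N*(N-1)^2*(V+1)"
      using outside_fraction_key_inequality[OF assms] by (simp add: algebra_simps)
    hence "(4*D*W + W^2)*N \<le> (8*N*(N-1)^2*(V+1))*N" using assms(1) by (intro mult_right_mono) auto
    also have "\<dots> = (2*V+2)*(4*D^2)" unfolding D_def by (simp add: power2_eq_square algebra_simps)
    finally show ?thesis using D0 by (simp add: divide_le_eq)
  qed
  finally show ?thesis .
qed

text \<open>Dense regime, few matched edges: the clique on U + V vertices leaves at most an
  outside fraction of 0-edges.\<close>

lemma dense_bound_few_matched_edges: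
  fixes N U V Q d :: real
  assumes "N = 2*V + U" "0 \<le> Q" "Q \<le> V" "V \<le> U - 3/2" "N \<ge> 5" "d \<le> 1"
    "V = 0 \<or> V \<ge> 1"
    and forced: "d*(N*(N-1)/2) \<ge> forced_ones U V Q"
  shows "U \<le> d*N - (1-d)^2*N/4 + 2"
proof -
  define e where "e = 1 - d"
  define e' where "e' = outside_fraction N V"
  have NN: "N*(N-1) > 0" using assms(5) by simp
  have "(U+V)*(U+V-1) = N*(N-1) - V*(2*N-1-V)" using assms(1) by (simp add: algebra_simps)
  with forced forced_ones_ge_clique[OF assms(2-4)]
  have "d*(N*(N-1)) \<ge> N*(N-1) - V*(2*N-1-V)" by simp
  hence "e*(N*(N-1)) \<le> V*(2*N-1-V)" unfolding e_def by (simp add: algebra_simps)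
  hence ee: "e \<le> e'" unfolding e'_def outside_fraction_def using NN by (simp add: pos_le_divide_eq)
  have e0: "e \<ge> 0" unfolding e_def using assms(6) by simp
  have "e^2 \<le> e'^2" using ee e0 by (intro power_mono) auto
  hence "e*N + e^2*N/4 \<le> e'*N + e'^2*N/4" using ee assms(5)
    by (intro add_mono divide_right_mono mult_right_mono) auto
  also have "\<dots> \<le> 2*V + 2" unfolding e'_def using assms
    by (intro outside_fraction_bound) auto
  finally show ?thesis unfolding e_def using assms(1) by (simp add: algebra_simps)
qed

lemma half_unmatched_le_f_bound:
  fixes n u v q :: nat and d :: real
  assumes "n = 2*v + u" "q \<le> v" "n \<ge> 5" "0 \<le> d" "d \<le> 1"
    and forced: "d*(real n*(real n-1)/2) \<ge> forced_ones u v q"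
  shows "real u / 2 \<le> f_bound n d"
proof -
  have N: "real n = 2*real v + real u" "0 \<le> real q" "real q \<le> real v" "real n \<ge> 5"
    using assms(1-3) by auto
  show ?thesis
  proof (cases "d \<le> 9/25")
    case True
    then have "real u \<le> 3/4*d*real n + 2" using sparse_bound N assms(4) forced by blast
    thus ?thesis unfolding f_bound_def using True by simp
  next
    case False
    have "real u \<le> d*real n - (1-d)^2*real n/4 + 2"
    proof (cases "real v \<ge> real u - 3/2")
      case True
      then show ?thesis using dense_bound_many_matched_edges N False assms(5) forced by simp
    next
      case many: False
      have "real v = 0 \<or> real v \<ge> 1" by (cases v) auto
      with N many assms(5) forced show ?thesis by (intro dense_bound_few_matched_edges) auto
    qed
    thus ?thesis unfolding f_bound_def using False by (simp add: mult.commute)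
  qed
qed

lemma real_choose_two: "real (m choose 2) = real m * (real m - 1) / 2"
  by (cases m) (simp_all add: choose_two real_of_nat_div algebra_simps)

text \<open>The natural-number edge count dominates its real relaxation (truncated subtraction
  only increases it).\<close>

lemma forced_ones_le_count:
  fixes u v q :: nat
  assumes "q \<le> v"
  shows "forced_ones u v q \<le> real ((u choose 2) + q*u + (v - q)*(2*u - 2) + (q choose 2))"
proof -
  have "2*real u - 2 \<le> real (2*u - 2)" by linarith
  hence "(real v - real q)*(2*real u - 2) \<le> real (v - q) * real (2*u - 2)"
    using assms by (simp add: of_nat_diff mult_left_mono)
  thus ?thesis unfolding forced_ones_def by (simp add: real_choose_two)
qed

lemma finite_Kn_edges: "finite (Kn_edges n)"
proof (rule finite_subset)
  show "Kn_edges n \<subseteq> Pow {..<n}" unfolding Kn_edges_def by auto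
qed simp

lemma Kn_edges_iff: "e \<in> Kn_edges n \<longleftrightarrow> (\<exists>x y. e = {x,y} \<and> x \<noteq> y \<and> x < n \<and> y < n)"
  unfolding Kn_edges_def card_2_iff by auto

lemma doubleton_in_Kn_edges: "x \<noteq> y \<Longrightarrow> x < n \<Longrightarrow> y < n \<Longrightarrow> {x,y} \<in> Kn_edges n"
  unfolding Kn_edges_iff by blast

lemma card_le_weight_if_ones:
  assumes "F \<subseteq> Kn_edges n" "\<forall>e\<in>F. w e = 1"
  shows "card F \<le> weight w (Kn_edges n)"
proof -
  have "card F = sum w F" using assms(2) by simp
  also have "\<dots> \<le> sum w (Kn_edges n)" using assms(1) finite_Kn_edges by (intro sum_mono2) auto
  finally show ?thesis unfolding weight_def .
qed

definition zero_matching :: "nat \<Rightarrow> (nat set \<Rightarrow> nat) \<Rightarrow> nat set set \<Rightarrow> bool" where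
  "zero_matching n w N \<longleftrightarrow> N \<subseteq> Kn_edges n \<and> (\<forall>e\<in>N. w e = 0) \<and>
     (\<forall>e\<in>N. \<forall>f\<in>N. e \<noteq> f \<longrightarrow> e \<inter> f = {})"

lemma zero_matching_exchange:
  assumes N: "zero_matching n w N" and R: "R \<subseteq> N"
    and A: "A \<subseteq> Kn_edges n" "\<forall>a\<in>A. w a = 0" "\<forall>a\<in>A. \<forall>b\<in>A. a \<noteq> b \<longrightarrow> a \<inter> b = {}"
      "\<forall>a\<in>A. \<forall>f\<in>N - R. a \<inter> f = {}"
  shows "zero_matching n w ((N - R) \<union> A)" "card ((N - R) \<union> A) = card N - card R + card A"
proof -
  have fin: "finite N" "finite A"
    using N A(1) finite_subset[OF _ finite_Kn_edges] unfolding zero_matching_def by blast+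
  have "a \<notin> N - R" if "a \<in> A" for a
  proof
    assume "a \<in> N - R"
    hence "a = {}" using A(4) that by blast
    thus False using that A(1) unfolding Kn_edges_def by auto
  qed
  hence "(N - R) \<inter> A = {}" by blast
  hence "card ((N - R) \<union> A) = card (N - R) + card A" using fin by (simp add: card_Un_disjoint)
  thus "card ((N - R) \<union> A) = card N - card R + card A"
    using R fin finite_subset[OF R] by (simp add: card_Diff_subset)
  show "zero_matching n w ((N - R) \<union> A)"
    unfolding zero_matching_def
  proof (intro conjI ballI impI)
    show "(N - R) \<union> A \<subseteq> Kn_edges n" using N A(1) unfolding zero_matching_def by blast
    show "w e = 0" if "e \<in> (N - R) \<union> A" for e
      using that N A(2) unfolding zero_matching_def by blast
    show "e \<inter> f = {}" if ef: "e \<in> (N - R) \<union> A" "f \<in> (N - R) \<union> A" "e \<noteq> f" for e f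
    proof -
      from ef(1,2) consider "e \<in> N - R" "f \<in> N - R" | "e \<in> N - R" "f \<in> A" | "e \<in> A" "f \<in> N - R"
        | "e \<in> A" "f \<in> A" by blast
      then show ?thesis
      proof cases
        case 1
        then show ?thesis using N ef(3) unfolding zero_matching_def by blast
      next
        case 2
        then have "f \<inter> e = {}" using A(4) by blast
        then show ?thesis by (simp add: Int_commute)
      qed (use A(3,4) ef(3) in blast)+
    qed
  qed
qed

lemma pairing_exists:
  assumes "finite S"
  shows "\<exists>P. (\<forall>p\<in>P. p \<subseteq> S \<and> card p = 2) \<and> (\<forall>p\<in>P. \<forall>p'\<in>P. p \<noteq> p' \<longrightarrow> p \<inter> p' = {})
          \<and> card P = card S div 2"
  using assms
proof (induction "card S" arbitrary: S rule: less_induct)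
  case less
  show ?case
  proof (cases "card S < 2")
    case True
    then show ?thesis by (intro exI[of _ "{}"]) auto
  next
    case False
    then obtain T where "T \<subseteq> S" "card T = 2" using obtain_subset_with_card_n[of 2 S] by force
    then obtain x y where xy: "x \<in> S" "y \<in> S" "x \<noteq> y" unfolding card_2_iff by blast
    define S' where "S' = S - {x,y}"
    have S': "finite S'" "card S' < card S" "card S' = card S - 2" "x \<notin> S'"
      unfolding S'_def using xy less.prems False by (simp_all add: card_Diff_subset)
    then obtain P where P: "\<forall>p\<in>P. p \<subseteq> S' \<and> card p = 2"
      "\<forall>p\<in>P. \<forall>p'\<in>P. p \<noteq> p' \<longrightarrow> p \<inter> p' = {}" "card P = card S' div 2"
      using less.hyps[OF S'(2) S'(1)] by blast
    have "P \<subseteq> Pow S'" using P(1) by blast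
    hence "finite P" using S'(1) by (simp add: finite_subset)
    moreover have "{x,y} \<notin> P" using P(1) S'(4) by blast
    ultimately have card: "card (insert {x,y} P) = card S div 2" using P(3) S'(3) False by simp
    have new: "\<forall>p\<in>P. {x,y} \<inter> p = {}" using P(1) unfolding S'_def by blast
    have disjoint: "\<forall>p\<in>insert {x,y} P. \<forall>p'\<in>insert {x,y} P. p \<noteq> p' \<longrightarrow> p \<inter> p' = {}"
    proof (intro ballI impI)
      fix p p' assume "p \<in> insert {x,y} P" "p' \<in> insert {x,y} P" "p \<noteq> p'"
      then show "p \<inter> p' = {}" using new P(2) by (metis Int_commute insertE)
    qed
    have "\<forall>p\<in>insert {x,y} P. p \<subseteq> S \<and> card p = 2" using P(1) xy unfolding S'_def by auto
    with card disjoint show ?thesis by blast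
  qed
qed

locale zero_matched_instance =
  fixes n :: nat and w :: "nat set \<Rightarrow> nat" and N :: "nat set set"
  assumes zero_one: "zero_one_instance n w"
    and matching: "zero_matching n w N"
begin

definition matched :: "nat set" where "matched = \<Union>N"

definition unmatched :: "nat set" where "unmatched = {..<n} - matched"

lemma weight_01: "e \<in> Kn_edges n \<Longrightarrow> w e = 0 \<or> w e = 1"
  using zero_one unfolding zero_one_instance_def by auto

lemma matching_edges: "N \<subseteq> Kn_edges n" "\<forall>e\<in>N. w e = 0"
  "\<And>e f. e \<in> N \<Longrightarrow> f \<in> N \<Longrightarrow> e \<noteq> f \<Longrightarrow> e \<inter> f = {}"
  using matching unfolding zero_matching_def by auto

lemma finite_matching: "finite N"
  using finite_subset[OF matching_edges(1) finite_Kn_edges] .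

lemma matching_edge_cases:
  assumes "e \<in> N"
  obtains a b where "e = {a,b}" "a \<noteq> b"
  using assms matching_edges(1) Kn_edges_iff by blast

lemma matching_edge_finite:
  assumes "e \<in> N"
  shows "finite e"
proof -
  have "card e = 2" using assms matching_edges(1) unfolding Kn_edges_def by blast
  thus ?thesis by (simp add: card_ge_0_finite)
qed

lemma matched_unmatched_disjoint: "matched \<inter> unmatched = {}"
  unfolding unmatched_def by blast

lemma unmatched_less: "x \<in> unmatched \<Longrightarrow> x < n"
  unfolding unmatched_def by blast

lemma matched_less: "x \<in> matched \<Longrightarrow> x < n"
  using matching_edges(1) unfolding matched_def Kn_edges_def by blast

lemma vertex_count: "n = 2 * card N + card unmatched"
proof -
  have edge_card: "card e = 2" if "e \<in> N" for e
    using that matching_edges(1) unfolding Kn_edges_def by auto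
  have "card matched = sum card N"
    unfolding matched_def using matching_edges(3) edge_card
    by (intro card_Union_disjoint) (auto simp: pairwise_def disjnt_def matching_edge_finite)
  also have "\<dots> = 2 * card N" using edge_card by simp
  finally have "card matched = 2 * card N" .
  moreover have "matched \<subseteq> {..<n}"
    unfolding matched_def using matching_edges(1) unfolding Kn_edges_def by blast
  hence "card {..<n} = card matched + card unmatched"
    unfolding unmatched_def by (metis card_Diff_subset card_mono finite_lessThan finite_subset le_add_diff_inverse)
  ultimately show ?thesis by simp
qed

lemma extends_to_optimal_matching:
  "\<exists>M. optimal_matching n M \<and> weight w M \<le> card unmatched div 2"
proof -
  obtain P where P: "\<forall>p\<in>P. p \<subseteq> unmatched \<and> card p = 2"
    "\<forall>p\<in>P. \<forall>p'\<in>P. p \<noteq> p' \<longrightarrow> p \<inter> p' = {}" "card P = card unmatched div 2"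
    using pairing_exists[of unmatched] unfolding unmatched_def by blast
  have PK: "P \<subseteq> Kn_edges n" using P(1) unfolding Kn_edges_def unmatched_def by auto
  have finP: "finite P" using finite_subset[OF PK finite_Kn_edges] .
  have NP: "e \<inter> p = {}" if "e \<in> N" "p \<in> P" for e p
    using that P(1) matched_unmatched_disjoint unfolding matched_def by blast
  have NP_disj: "N \<inter> P = {}" using NP P(1) by fastforce
  have "optimal_matching n (N \<union> P)"
    unfolding optimal_matching_def
  proof (intro conjI ballI impI)
    show "N \<union> P \<subseteq> Kn_edges n" using matching_edges(1) PK by blast
    show "card (N \<union> P) = n div 2"
      using vertex_count P(3) NP_disj finite_matching finP by (simp add: card_Un_disjoint)
    show "e \<inter> f = {}" if "e \<in> N \<union> P" "f \<in> N \<union> P" "e \<noteq> f" for e f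
      using that matching_edges(3) NP P(2) by (metis Int_commute UnE)
  qed
  moreover have "weight w (N \<union> P) \<le> card unmatched div 2"
  proof -
    have "weight w (N \<union> P) = sum w N + sum w P"
      unfolding weight_def using NP_disj finite_matching finP by (simp add: sum.union_disjoint)
    also have "sum w N = 0" using matching_edges(2) by simp
    also have "sum w P \<le> sum (\<lambda>_. 1) P" using PK weight_01 by (intro sum_mono) fastforce
    finally show ?thesis using P(3) by simp
  qed
  ultimately show ?thesis by blast
qed

end

locale maximum_zero_matching = zero_matched_instance +
  assumes maximum: "\<And>N'. zero_matching n w N' \<Longrightarrow> card N' \<le> card N"
begin

text \<open>This is used with R of size
  0, 1 and 2, i.e. to exclude augmenting paths of length 1, 3 and 5.\<close>

lemma no_augmentation:
  assumes R: "R \<subseteq> N" and A: "A \<subseteq> Kn_edges n" "\<forall>a\<in>A. w a = 0"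
      "\<forall>a\<in>A. \<forall>b\<in>A. a \<noteq> b \<longrightarrow> a \<inter> b = {}"
    and vertices: "\<Union>A \<subseteq> unmatched \<union> \<Union>R"
  shows "card A \<le> card R"
proof -
  have "a \<inter> f = {}" if "a \<in> A" "f \<in> N - R" for a f
  proof -
    have "f \<inter> unmatched = {}" using that(2) unfolding unmatched_def matched_def by blast
    moreover have "f \<inter> \<Union>R = {}" using that(2) R matching_edges(3) by blast
    ultimately show ?thesis using that(1) vertices by blast
  qed
  then have "zero_matching n w ((N - R) \<union> A)" "card ((N - R) \<union> A) = card N - card R + card A"
    using zero_matching_exchange[OF matching R A] by blast+
  moreover have "card R \<le> card N" using R finite_matching by (rule card_mono[rotated])
  ultimately show ?thesis using maximum by fastforce
qed

text \<open>No augmenting path of length 1: the unmatched vertices span only 1-edges.\<close>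

lemma unmatched_clique:
  assumes "x \<in> unmatched" "y \<in> unmatched" "x \<noteq> y"
  shows "w {x,y} = 1"
proof (rule ccontr)
  have K: "{x,y} \<in> Kn_edges n" using assms unmatched_less by (intro doubleton_in_Kn_edges) auto
  assume "w {x,y} \<noteq> 1"
  hence "w {x,y} = 0" using weight_01[OF K] by simp
  hence "card {{x,y}} \<le> card ({} :: nat set set)"
    using K assms by (intro no_augmentation) auto
  thus False by simp
qed

definition zero_nbrs :: "nat \<Rightarrow> nat set" where
  "zero_nbrs v = {x \<in> unmatched. w {v,x} = 0}"

lemma finite_zero_nbrs: "finite (zero_nbrs v)"
  unfolding zero_nbrs_def unmatched_def by simp

text \<open>No augmenting path of length 3: if both ends of a matching edge have unmatched
  0-neighbours, then these are all one and the same vertex.\<close>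

lemma zero_nbrs_unique:
  assumes e: "{a,b} \<in> N" "a \<noteq> b" and xy: "x \<in> zero_nbrs a" "y \<in> zero_nbrs b"
  shows "x = y"
proof (rule ccontr)
  assume "x \<noteq> y"
  have ab: "a \<in> matched" "b \<in> matched" "a < n" "b < n"
    using e matching_edges(1) unfolding matched_def Kn_edges_def by auto
  have xy': "x \<in> unmatched" "y \<in> unmatched" "w {x,a} = 0" "w {y,b} = 0"
    using xy unfolding zero_nbrs_def by (auto simp: insert_commute)
  hence ne: "x \<noteq> a" "x \<noteq> b" "y \<noteq> a" "y \<noteq> b"
    using ab matched_unmatched_disjoint by auto
  have "card {{x,a},{y,b}} \<le> card {{a,b}}"
  proof (rule no_augmentation)
    show "{{x,a},{y,b}} \<subseteq> Kn_edges n"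
      using ne ab xy' unmatched_less by (auto intro: doubleton_in_Kn_edges)
  qed (use e xy' ne \<open>x \<noteq> y\<close> in auto)
  moreover have "{x,a} \<noteq> {y,b}" using ne \<open>x \<noteq> y\<close> by (auto simp: doubleton_eq_iff)
  ultimately show False by simp
qed

text \<open>A matching edge is heavy if one end has at least two unmatched 0-neighbours; by the
  previous lemma its other end, the lonely end, has none.\<close>

definition heavy :: "nat set set" where
  "heavy = {e \<in> N. \<exists>v\<in>e. 2 \<le> card (zero_nbrs v)}"

definition lonely_end :: "nat set \<Rightarrow> nat" where
  "lonely_end e = (SOME s. \<exists>t. e = {s,t} \<and> s \<noteq> t \<and> zero_nbrs s = {} \<and> 2 \<le> card (zero_nbrs t))"

lemma heavy_edge_structure:
  assumes "e \<in> heavy"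
  shows "\<exists>s t. e = {s,t} \<and> s \<noteq> t \<and> zero_nbrs s = {} \<and> 2 \<le> card (zero_nbrs t)"
proof -
  obtain t where t: "t \<in> e" "2 \<le> card (zero_nbrs t)" and eN: "e \<in> N"
    using assms unfolding heavy_def by blast
  then obtain s where s: "e = {s,t}" "s \<noteq> t"
    using matching_edge_cases by (metis doubleton_eq_iff insertE singletonD)
  have "zero_nbrs s = {}"
  proof (rule ccontr)
    assume "zero_nbrs s \<noteq> {}"
    then obtain y where "y \<in> zero_nbrs s" by blast
    hence "zero_nbrs t \<subseteq> {y}" using zero_nbrs_unique[of s t y] eN s by blast
    hence "card (zero_nbrs t) \<le> 1" using card_mono[of "{y}"] by fastforce
    thus False using t(2) by simp
  qed
  thus ?thesis using s t(2) by blast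
qed

lemma lonely_end_spec:
  assumes "e \<in> heavy"
  shows "\<exists>t. e = {lonely_end e, t} \<and> lonely_end e \<noteq> t \<and> zero_nbrs (lonely_end e) = {}
    \<and> 2 \<le> card (zero_nbrs t)"
  using someI_ex[OF heavy_edge_structure[OF assms]] unfolding lonely_end_def .

lemma lonely_end_isolated: "e \<in> heavy \<Longrightarrow> zero_nbrs (lonely_end e) = {}"
  using lonely_end_spec by blast

lemma lonely_end_in: "e \<in> heavy \<Longrightarrow> lonely_end e \<in> e"
  using lonely_end_spec by blast

lemma lonely_end_partner:
  assumes "e \<in> heavy"
  obtains t where "e = {lonely_end e, t}" "lonely_end e \<noteq> t" "2 \<le> card (zero_nbrs t)"
  using lonely_end_spec[OF assms] that by blast

text \<open>No augmenting path of length 5: the lonely ends of two heavy edges are joined by a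
  1-edge.\<close>

lemma lonely_ends_joined_by_one:
  assumes e: "e \<in> heavy" "e' \<in> heavy" "e \<noteq> e'"
  shows "w {lonely_end e, lonely_end e'} = 1"
proof (rule ccontr)
  let ?s = "lonely_end e" and ?s' = "lonely_end e'"
  obtain t where t: "e = {?s, t}" "?s \<noteq> t" "2 \<le> card (zero_nbrs t)"
    by (rule lonely_end_partner[OF e(1)])
  obtain t' where t': "e' = {?s', t'}" "?s' \<noteq> t'" "2 \<le> card (zero_nbrs t')"
    by (rule lonely_end_partner[OF e(2)])
  have eN: "e \<in> N" "e' \<in> N" using e unfolding heavy_def by auto
  have "e \<inter> e' = {}" using eN e(3) matching_edges(3) by blast
  hence dist: "?s \<noteq> ?s'" "?s \<noteq> t'" "t \<noteq> ?s'" "t \<noteq> t'" using t(1) t'(1) by auto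
  have inV: "?s \<in> matched" "t \<in> matched" "?s' \<in> matched" "t' \<in> matched"
    using eN t(1) t'(1) unfolding matched_def by blast+
  have K: "{?s, ?s'} \<in> Kn_edges n" using dist inV matched_less by (intro doubleton_in_Kn_edges) auto
  assume "w {?s, ?s'} \<noteq> 1"
  hence w0: "w {?s, ?s'} = 0" using weight_01[OF K] by simp
  obtain y where y: "y \<in> zero_nbrs t'" using t'(3) by fastforce
  have "card (zero_nbrs t - {y}) \<ge> 1" using t(3) finite_zero_nbrs[of t] by (auto simp: card_Diff_singleton_if)
  hence "zero_nbrs t - {y} \<noteq> {}" by (metis card.empty not_one_le_zero)
  then obtain x where x: "x \<in> zero_nbrs t" "x \<noteq> y" by blast
  have xy: "x \<in> unmatched" "y \<in> unmatched" "w {x,t} = 0" "w {t',y} = 0"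
    using x y unfolding zero_nbrs_def by (auto simp: insert_commute)
  hence ne: "x \<noteq> t" "x \<noteq> ?s" "x \<noteq> ?s'" "x \<noteq> t'" "y \<noteq> t" "y \<noteq> ?s" "y \<noteq> ?s'" "y \<noteq> t'"
    using inV matched_unmatched_disjoint by auto
  have "card {{x,t}, {?s,?s'}, {t',y}} \<le> card {e,e'}"
  proof (rule no_augmentation)
    show "{{x,t}, {?s,?s'}, {t',y}} \<subseteq> Kn_edges n"
      using ne dist inV xy unmatched_less matched_less by (auto intro: doubleton_in_Kn_edges)
  qed (use eN t(1,2) t'(1,2) xy w0 ne dist x(2) in auto)
  moreover have "card {{x,t}, {?s,?s'}, {t',y}} = 3" using ne dist x(2) by (auto simp: doubleton_eq_iff)
  moreover have "card {e,e'} = 2" using e(3) by simp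
  ultimately show False by simp
qed

definition one_degree :: "nat \<Rightarrow> nat" where
  "one_degree v = card (unmatched - zero_nbrs v)"

lemma one_degree_eq: "one_degree v = card unmatched - card (zero_nbrs v)"
  unfolding one_degree_def
  by (rule card_Diff_subset[OF finite_zero_nbrs]) (auto simp: zero_nbrs_def)

text \<open>A heavy edge contributes at least U such 1-edges (from its lonely end), any other
  matching edge at least 2U - 2 (each end misses at most one unmatched vertex).\<close>

lemma matching_edge_one_degree:
  assumes "e \<in> N"
  shows "(if e \<in> heavy then card unmatched else 2 * card unmatched - 2) \<le> sum one_degree e"
proof -
  obtain a b where ab: "e = {a,b}" "a \<noteq> b" using matching_edge_cases[OF assms] by blast
  show ?thesis
  proof (cases "e \<in> heavy")
    case True
    then have "lonely_end e \<in> e" "one_degree (lonely_end e) = card unmatched"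
      using lonely_end_in lonely_end_isolated one_degree_eq by auto
    then show ?thesis using True ab by auto
  next
    case False
    then have "card (zero_nbrs a) \<le> 1" "card (zero_nbrs b) \<le> 1"
      using assms ab unfolding heavy_def by auto
    then show ?thesis using False ab one_degree_eq by auto
  qed
qed

lemma one_degree_sum_bound:
  "card heavy * card unmatched + (card N - card heavy) * (2 * card unmatched - 2) \<le> sum one_degree matched"
proof -
  let ?bound = "\<lambda>e. if e \<in> heavy then card unmatched else 2 * card unmatched - 2"
  have heavy_sub: "heavy \<subseteq> N" unfolding heavy_def by blast
  have "sum ?bound N = sum (\<lambda>_. card unmatched) heavy + sum (\<lambda>_. 2 * card unmatched - 2) (N - heavy)"
    using finite_matching heavy_sub by (simp add: sum.If_cases Int_absorb1 Diff_eq)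
  also have "\<dots> = card heavy * card unmatched + (card N - card heavy) * (2 * card unmatched - 2)"
    using finite_matching heavy_sub by (simp add: card_Diff_subset finite_subset)
  finally have "card heavy * card unmatched + (card N - card heavy) * (2 * card unmatched - 2) = sum ?bound N" ..
  also have "\<dots> \<le> sum (sum one_degree) N" using matching_edge_one_degree by (rule sum_mono)
  also have "\<dots> = sum one_degree matched"
  proof -
    have "\<forall>e\<in>N. finite e" using matching_edge_finite by blast
    thus ?thesis unfolding matched_def using matching_edges(3) by (simp add: sum.Union_disjoint)
  qed
  finally show ?thesis .
qed

definition unmatched_pairs :: "nat set set" where
  "unmatched_pairs = {S. S \<subseteq> unmatched \<and> card S = 2}"

definition cross_one_pairs :: "nat set set" where
  "cross_one_pairs = (\<lambda>(v,x). {v,x}) ` (SIGMA v:matched. unmatched - zero_nbrs v)"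

definition lonely_pairs :: "nat set set" where
  "lonely_pairs = {S. S \<subseteq> lonely_end ` heavy \<and> card S = 2}"

lemma unmatched_pairs:
  "unmatched_pairs \<subseteq> Kn_edges n" "\<forall>S\<in>unmatched_pairs. w S = 1"
  "card unmatched_pairs = card unmatched choose 2"
proof -
  show "card unmatched_pairs = card unmatched choose 2"
    unfolding unmatched_pairs_def by (rule n_subsets) (simp add: unmatched_def)
  show "unmatched_pairs \<subseteq> Kn_edges n" "\<forall>S\<in>unmatched_pairs. w S = 1"
    unfolding unmatched_pairs_def Kn_edges_def
    using unmatched_less unmatched_clique by (auto simp: card_2_iff)
qed

lemma cross_one_pairs:
  "cross_one_pairs \<subseteq> Kn_edges n" "\<forall>S\<in>cross_one_pairs. w S = 1"
  "card cross_one_pairs = sum one_degree matched"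
proof -
  let ?pairs = "SIGMA v:matched. unmatched - zero_nbrs v"
  have "inj_on (\<lambda>(v,x). {v,x}) ?pairs"
    using matched_unmatched_disjoint by (auto simp: inj_on_def doubleton_eq_iff)
  moreover have "finite matched" using matched_less by (meson finite_subset lessThan_iff subsetI finite_lessThan)
  ultimately show "card cross_one_pairs = sum one_degree matched"
    unfolding cross_one_pairs_def one_degree_def by (simp add: card_image unmatched_def)
  show "cross_one_pairs \<subseteq> Kn_edges n"
    unfolding cross_one_pairs_def using matched_unmatched_disjoint matched_less unmatched_less
    by (auto intro!: doubleton_in_Kn_edges)
  show "\<forall>S\<in>cross_one_pairs. w S = 1"
  proof
    fix S assume "S \<in> cross_one_pairs"
    then obtain v x where "S = {v,x}" "v \<in> matched" "x \<in> unmatched" "w {v,x} \<noteq> 0"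
      unfolding cross_one_pairs_def zero_nbrs_def by auto
    moreover from this have "S \<in> Kn_edges n"
      using matched_unmatched_disjoint matched_less unmatched_less by (auto intro!: doubleton_in_Kn_edges)
    ultimately show "w S = 1" using weight_01 by fastforce
  qed
qed

lemma lonely_pairs:
  "lonely_pairs \<subseteq> Kn_edges n" "\<forall>S\<in>lonely_pairs. w S = 1"
  "card lonely_pairs = card heavy choose 2"
proof -
  have heavy_matched: "lonely_end e \<in> matched" if "e \<in> heavy" for e
    using lonely_end_in[OF that] that unfolding heavy_def matched_def by blast
  have "inj_on lonely_end heavy"
  proof
    fix e e' assume e: "e \<in> heavy" "e' \<in> heavy" "lonely_end e = lonely_end e'"
    have "lonely_end e \<in> e \<inter> e'" using e lonely_end_in by (metis IntI)
    thus "e = e'" using e matching_edges(3) unfolding heavy_def by blast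
  qed
  moreover have "finite heavy" using finite_matching unfolding heavy_def by simp
  ultimately show "card lonely_pairs = card heavy choose 2"
    unfolding lonely_pairs_def by (simp add: n_subsets card_image)
  show "\<forall>S\<in>lonely_pairs. w S = 1" "lonely_pairs \<subseteq> Kn_edges n"
  proof -
    have "S \<in> Kn_edges n \<and> w S = 1" if S: "S \<in> lonely_pairs" for S
    proof -
      obtain e e' where "S = {lonely_end e, lonely_end e'}" "lonely_end e \<noteq> lonely_end e'"
        "e \<in> heavy" "e' \<in> heavy"
        using S unfolding lonely_pairs_def card_2_iff by blast
      then show ?thesis
        using lonely_ends_joined_by_one heavy_matched matched_less by (auto intro!: doubleton_in_Kn_edges)
    qed
    thus "\<forall>S\<in>lonely_pairs. w S = 1" "lonely_pairs \<subseteq> Kn_edges n" by blast+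
  qed
qed

lemma one_edge_count:
  "(card unmatched choose 2) + sum one_degree matched + (card heavy choose 2) \<le> weight w (Kn_edges n)"
proof -
  have lonely_sub: "S \<subseteq> matched" if "S \<in> lonely_pairs" for S
    using that lonely_end_in unfolding lonely_pairs_def heavy_def matched_def by blast
  have cross_meets: "S \<inter> matched \<noteq> {}" "S \<inter> unmatched \<noteq> {}" if "S \<in> cross_one_pairs" for S
    using that unfolding cross_one_pairs_def by auto
  have unmatched_sub: "S \<subseteq> unmatched" "S \<noteq> {}" if "S \<in> unmatched_pairs" for S
    using that unfolding unmatched_pairs_def by auto
  have "S \<notin> cross_one_pairs" "S \<notin> lonely_pairs" if "S \<in> unmatched_pairs" for S
    using unmatched_sub[OF that] cross_meets(1) lonely_sub matched_unmatched_disjoint by blast+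
  moreover have "S \<notin> lonely_pairs" if "S \<in> cross_one_pairs" for S
    using cross_meets(2)[OF that] lonely_sub matched_unmatched_disjoint by blast
  ultimately have disj: "unmatched_pairs \<inter> cross_one_pairs = {}"
    "(unmatched_pairs \<union> cross_one_pairs) \<inter> lonely_pairs = {}" by blast+
  have fin: "finite unmatched_pairs" "finite cross_one_pairs" "finite lonely_pairs"
    using unmatched_pairs(1) cross_one_pairs(1) lonely_pairs(1) by (auto intro: finite_subset[OF _ finite_Kn_edges])
  have "card (unmatched_pairs \<union> cross_one_pairs \<union> lonely_pairs)
      = (card unmatched choose 2) + sum one_degree matched + (card heavy choose 2)"
    using disj fin unmatched_pairs(3) cross_one_pairs(3) lonely_pairs(3) by (simp add: card_Un_disjoint)
  moreover have "card (unmatched_pairs \<union> cross_one_pairs \<union> lonely_pairs) \<le> weight w (Kn_edges n)"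
    using unmatched_pairs cross_one_pairs lonely_pairs by (intro card_le_weight_if_ones) auto
  ultimately show ?thesis by simp
qed

lemma card_heavy_le: "card heavy \<le> card N"
  using finite_matching unfolding heavy_def by (simp add: card_mono)

lemma forced_ones_le_weight:
  "forced_ones (card unmatched) (card N) (card heavy) \<le> real (weight w (Kn_edges n))"
proof -
  have "forced_ones (card unmatched) (card N) (card heavy)
      \<le> real ((card unmatched choose 2) + card heavy * card unmatched
               + (card N - card heavy) * (2 * card unmatched - 2) + (card heavy choose 2))"
    using card_heavy_le by (rule forced_ones_le_count)
  also have "\<dots> \<le> real (weight w (Kn_edges n))"
    unfolding of_nat_le_iff using one_degree_sum_bound one_edge_count by linarith
  finally show ?thesis .
qed

end

lemma maximum_zero_matching_exists:
  assumes "zero_one_instance n w"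
  shows "\<exists>N. maximum_zero_matching n w N"
proof -
  have "card N < card (Kn_edges n) + 1" if "zero_matching n w N" for N
    using that finite_Kn_edges card_mono unfolding zero_matching_def by fastforce
  moreover have "zero_matching n w {}" unfolding zero_matching_def by simp
  ultimately obtain N where "zero_matching n w N" "\<forall>N'. zero_matching n w N' \<longrightarrow> card N' \<le> card N"
    using ex_has_greatest_nat[of "zero_matching n w" "{}" card] by blast
  with assms show ?thesis
    unfolding maximum_zero_matching_def maximum_zero_matching_axioms_def zero_matched_instance_def by blast
qed

theorem proposition5p2:
  fixes n :: nat and w :: "nat set \<Rightarrow> nat" and d :: real
  assumes "n \<ge> 1"
    and "zero_one_instance n w"
    and "0 \<le> d" and "d \<le> 1"
    and "real (weight w (Kn_edges n)) = d * real (n choose 2)"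
    and "1 / real n \<le> d" and "d \<le> 1 - 4 / real n"
  shows "\<exists>M. optimal_matching n M \<and> real (weight w M) \<le> f_bound n d"
proof -
  obtain N where "maximum_zero_matching n w N" using maximum_zero_matching_exists[OF assms(2)] by blast
  then interpret maximum_zero_matching n w N .
  obtain M where M: "optimal_matching n M" "weight w M \<le> card unmatched div 2"
    using extends_to_optimal_matching by blast
  have "5 / real n \<le> 1" using assms(6,7) by (simp add: field_simps)
  hence "n \<ge> 5" using assms(1) by (simp add: divide_le_eq)
  moreover have "forced_ones (card unmatched) (card N) (card heavy) \<le> d * (real n * (real n - 1) / 2)"
    using forced_ones_le_weight assms(5) by (simp add: real_choose_two)
  ultimately have "real (card unmatched) / 2 \<le> f_bound n d"
    using half_unmatched_le_f_bound[OF vertex_count card_heavy_le] assms(3,4) by blast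
  moreover have "real (weight w M) \<le> real (card unmatched) / 2"
    using M(2) by linarith
  ultimately show ?thesis using M(1) by force
qed

end
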